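(* Let $n\ge2$, $G=\mathrm{SL}(n,\mathbb{R})$, and let $V$ be a finite-dimensional real vector space with a continuous linear representation of $G$. Let $\mathcal{B}\subset\mathbb{R}^{n-1}$ be an affine basis of $\mathbb{R}^{n-1}$ and let $v\in V$, $v\ne0$. Suppose that $u(e)v\in V^0+V^-$ for all $e\in\mathcal{B}$. Then $\pi_0(u(e)v)\ne0$ for all $e\in\mathcal{B}$.
   Context: $\mathcal{A}=\mathrm{diag}(n-1,-1,\dots,-1)\in\mathfrak{sl}(n,\mathbb{R})$, acting on $V$ via the derived representation; $V$ is the direct sum of the eigenspaces $V^\mu=\{v\in V:\mathcal{A}v=\mu v\}$. $V^-=\sum_{\mu<0}V^\mu$, and $\pi_0:V\to V^0$ is the projection parallel to the other eigenspaces of $\mathcal{A}$. For $\xi=(\xi_1,\dots,\xi_{n-1})\in\mathbb{R}^{n-1}$, $u(\xi)$ is the identity matrix with first row replaced by $(1,\xi_1,\dots,\xi_{n-1})$. An affine basis of $\mathbb{R}^{n-1}$ is a set $\mathcal{B}$ such that for any $e\in\mathcal{B}$ the set $\{e'-e:e'\in\mathcal{B}\setminus\{e\}\}$ is a basis of $\mathbb{R}^{n-1}$. *)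

theory Defs
  imports "HOL-Analysis.Analysis"
begin

text \<open>The index set of R^n is the finite type 'n option, where
 None plays the role of the first coordinate and Some i (i :: 'n) the remaining
 n-1 coordinates; hence n = CARD('n) + 1 \<ge> 2, and R^(n-1) = real^'n.\<close>

definition SL :: "(real^'k^'k) set" where
  "SL = {g. det g = 1}"

definition is_cont_rep :: "(real^'k^'k \<Rightarrow> real^'m^'m) \<Rightarrow> bool" where
  "is_cont_rep \<rho> \<longleftrightarrow>
     \<rho> (mat 1) = mat 1 \<and>
     (\<forall>g\<in>SL. \<forall>h\<in>SL. \<rho> (g ** h) = \<rho> g ** \<rho> h) \<and>
     continuous_on SL \<rho>"

definition Amat :: "real^('n::finite option)^('n option)" where
  "Amat = (\<chi> i j. if i = j then (if i = None then real CARD('n) else -1) else 0)"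

definition expA :: "real \<Rightarrow> real^('n::finite option)^('n option)" where
  "expA t = (\<chi> i j. if i = j then (if i = None then exp (t * real CARD('n)) else exp (- t)) else 0)"

definition dA :: "(real^('n::finite option)^('n option) \<Rightarrow> real^'m^'m) \<Rightarrow> real^'m^'m" where
  "dA \<rho> = vector_derivative (\<lambda>t. \<rho> (expA t)) (at 0)"

definition eigsp :: "real^'m^'m \<Rightarrow> real \<Rightarrow> (real^'m) set" where
  "eigsp D \<mu> = {v. D *v v = \<mu> *\<^sub>R v}"

definition Vminus :: "real^'m^'m \<Rightarrow> (real^'m) set" where
  "Vminus D = span (\<Union>\<mu>\<in>{\<mu>. \<mu> < 0}. eigsp D \<mu>)"

definition pi0 :: "real^'m^'m \<Rightarrow> real^'m \<Rightarrow> real^'m" where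
  "pi0 D v = (THE w. w \<in> eigsp D 0 \<and> v - w \<in> span (\<Union>\<mu>\<in>{\<mu>. \<mu> \<noteq> 0}. eigsp D \<mu>))"

definition umat :: "real^'n::finite \<Rightarrow> real^('n::finite option)^('n option)" where
  "umat \<xi> = (\<chi> i j. if i = None then (case j of None \<Rightarrow> 1 | Some k \<Rightarrow> \<xi> $ k)
                     else (if i = j then 1 else 0))"

definition affine_basis :: "(real^'n::finite) set \<Rightarrow> bool" where
  "affine_basis B \<longleftrightarrow> (\<forall>e\<in>B. independent ((\<lambda>e'. e' - e) ` (B - {e})) \<and>
                                   span ((\<lambda>e'. e' - e) ` (B - {e})) = UNIV)"

end

theory Submission
  imports Defs "HOL-Real_Asymp.Real_Asymp"
begin

text \<open>Translating by u(-e) and conjugating by a block-diagonal matrix that commutes with A, the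
  affine basis becomes 0, e_1, ..., e_{n-1}. If pi0(u(e)v) vanished, w = u(e)v would lie in V^-, so
  exp(tA)w tends to 0 while exp(tA)u(e_k)w stays bounded for every k. A Bruhat-type identity in SL(n)
  turns the latter into boundedness of z = u(1,...,1)^T w under the flows of the conjugates of A by
  the transpositions (1 k+1); these flows commute and compose to exp(-tA). Uniform boundedness on the
  finite-dimensional space of such vectors gives |z| <= C |exp(tA)z|, whereas exp(tA)z tends to 0
  since conjugation by exp(tA) contracts u(1,...,1)^T to the identity. Hence z = 0 and v = 0.\<close>

section \<open>Matrices indexed by option types\<close>

lemma sum_UNIV_option:
  "(\<Sum>j\<in>(UNIV::'n::finite option set). f j) = f None + (\<Sum>k\<in>UNIV. f (Some k))"
  by (subst UNIV_option_conv) (simp add: sum.reindex)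

lemma matrix_eqI: "(\<And>x. A *v x = B *v x) \<Longrightarrow> A = (B::real^'k^'k)"
  using matrix_eq by blast

lemma sum_axis_mult: "(\<Sum>l\<in>UNIV. axis k a $ l * f l) = a * (f k::real)"
  by (simp add: axis_def if_distrib[of "\<lambda>a. a * _"] cong: if_cong)

definition diag_exp :: "real^'k \<Rightarrow> real^'k^'k" where
  "diag_exp x = (\<chi> i j. if i = j then exp (x$i) else 0)"

definition lmat :: "real^'n \<Rightarrow> real^('n::finite option)^('n option)" where
  "lmat c = transpose (umat c)"

text \<open>A representative in SL of the transposition of the coordinates None and Some k.\<close>
definition weyl :: "'n \<Rightarrow> real^('n::finite option)^('n option)" where
  "weyl k = (\<chi> i j. if i = None \<and> j = Some k then -1 else if i = Some k \<and> j = None then 1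
           else if i = j \<and> i \<noteq> None \<and> i \<noteq> Some k then 1 else 0)"

text \<open>diagA is the diagonal of A; diagA_swap k is the diagonal of its conjugate by weyl k.\<close>
definition diagA :: "real^('n::finite option)" where
  "diagA = (\<chi> i. if i = None then real CARD('n) else -1)"

definition diagA_swap :: "'n::finite \<Rightarrow> real^('n option)" where
  "diagA_swap k = (\<chi> i. if i = Some k then real CARD('n) else -1)"

lemma diag_exp_mult: "diag_exp d *v x = (\<chi> i. exp (d$i) * x$i)"
  unfolding vec_eq_iff matrix_vector_mult_def diag_exp_def
  by (simp add: if_distrib[of "\<lambda>a. a * _"] cong: if_cong)

lemma umat_mult:
  "umat c *v x = (\<chi> i. case i of None \<Rightarrow> x$None + (\<Sum>k\<in>UNIV. c$k * x$(Some k)) | Some k \<Rightarrow> x$(Some k))"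
  unfolding vec_eq_iff
proof
  fix i :: "'a option"
  show "(umat c *v x) $ i = (\<chi> i. case i of None \<Rightarrow> x$None + (\<Sum>k\<in>UNIV. c$k * x$(Some k))
                                    | Some k \<Rightarrow> x$(Some k)) $ i"
    by (cases i) (simp_all add: umat_def matrix_vector_mult_def sum_UNIV_option
                    if_distrib[of "\<lambda>a. a * _"] cong: if_cong)
qed

lemma lmat_mult:
  "lmat c *v x = (\<chi> i. case i of None \<Rightarrow> x$None | Some k \<Rightarrow> x$(Some k) + c$k * x$None)"
  unfolding vec_eq_iff
proof
  fix i :: "'a option"
  show "(lmat c *v x) $ i = (\<chi> i. case i of None \<Rightarrow> x$None | Some k \<Rightarrow> x$(Some k) + c$k * x$None) $ i"
    by (cases i) (simp_all add: lmat_def umat_def transpose_def matrix_vector_mult_def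
                    sum_UNIV_option if_distrib[of "\<lambda>a. a * _"] cong: if_cong)
qed

lemma weyl_mult:
  "weyl k *v x = (\<chi> i. if i = None then - x$(Some k) else if i = Some k then x$None else x$i)"
  unfolding vec_eq_iff
proof
  fix i :: "'a option"
  show "(weyl k *v x) $ i =
        (\<chi> i. if i = None then - x$(Some k) else if i = Some k then x$None else x$i) $ i"
    by (cases i) (auto simp add: weyl_def matrix_vector_mult_def sum_UNIV_option
                    if_distrib[of "\<lambda>a. a * _"] cong: if_cong)
qed

lemma lmat_lmat: "lmat c ** lmat d = lmat (c + d)"
  by (rule matrix_eqI) (auto simp: lmat_mult vec_eq_iff algebra_simps
                          simp flip: matrix_vector_mul_assoc split: option.splits)

lemma umat_umat: "umat c ** umat d = umat (c + d)"
  by (rule matrix_eqI) (auto simp: umat_mult vec_eq_iff algebra_simps sum.distrib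
                          simp flip: matrix_vector_mul_assoc split: option.splits)

lemma diag_exp_add: "diag_exp x ** diag_exp y = diag_exp (x + y)"
  by (rule matrix_eqI) (auto simp: diag_exp_mult vec_eq_iff algebra_simps exp_add
                          simp flip: matrix_vector_mul_assoc)

lemma lmat_0: "lmat 0 = mat 1"
  by (rule matrix_eqI) (auto simp: lmat_mult vec_eq_iff split: option.splits)

lemma umat_0: "umat 0 = mat 1"
  by (rule matrix_eqI) (auto simp: umat_mult vec_eq_iff split: option.splits)

lemma diag_exp_0: "diag_exp 0 = mat 1"
  by (rule matrix_eqI) (auto simp: diag_exp_mult vec_eq_iff)

lemma expA_eq_diag_exp: "expA t = diag_exp (t *\<^sub>R diagA)"
  by (auto simp: expA_def diag_exp_def diagA_def vec_eq_iff mult.commute)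

lemma exp_minus_Suc_card_mult_exp_card:
  "exp (-(real CARD('n)+1) * t) * exp (t * real CARD('n)) = exp (- t)"
  by (simp add: exp_add[symmetric] algebra_simps)

lemma diag_exp_diagA_lmat:
  "diag_exp (t *\<^sub>R diagA) ** lmat c =
     lmat (exp (-(real CARD('n)+1) * t) *\<^sub>R c) ** diag_exp (t *\<^sub>R (diagA::real^('n::finite option)))"
proof (rule matrix_eqI)
  fix x :: "real^('n option)"
  have "(diag_exp (t *\<^sub>R diagA) *v (lmat c *v x)) $ i =
        (lmat (exp (-(real CARD('n)+1) * t) *\<^sub>R c) *v (diag_exp (t *\<^sub>R diagA) *v x)) $ i" for i
  proof (cases i)
    case (Some j)
    have "exp (- t) * (x $ Some j + c $ j * x $ None) =
          exp (- t) * x $ Some j +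
            (exp (-(real CARD('n)+1) * t) * exp (t * real CARD('n))) * c $ j * x $ None"
      unfolding exp_minus_Suc_card_mult_exp_card by (simp add: distrib_left)
    then show ?thesis
      using Some by (simp add: diag_exp_mult lmat_mult diagA_def mult.assoc mult.left_commute)
  qed (simp add: diag_exp_mult lmat_mult diagA_def)
  then show "(diag_exp (t *\<^sub>R diagA) ** lmat c) *v x =
        (lmat (exp (-(real CARD('n)+1) * t) *\<^sub>R c) ** diag_exp (t *\<^sub>R diagA)) *v x"
    by (simp add: vec_eq_iff flip: matrix_vector_mul_assoc)
qed

lemma diag_exp_diagA_swap_lmat:
  "c $ k = 0 \<Longrightarrow> diag_exp (t *\<^sub>R diagA_swap k) ** lmat c = lmat c ** diag_exp (t *\<^sub>R diagA_swap k)"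
  by (rule matrix_eqI) (auto simp: diag_exp_mult lmat_mult vec_eq_iff diagA_swap_def algebra_simps
                          simp flip: matrix_vector_mul_assoc split: option.splits)

text \<open>A Bruhat-type decomposition: it trades the flow of diagA_swap k after a lower unipotent for
  the flow of diagA after an upper unipotent, up to a lower unipotent that tends to 1 as t grows.\<close>
lemma diag_exp_diagA_swap_lmat_axis:
  fixes k :: "'n::finite"
  shows "diag_exp (t *\<^sub>R diagA_swap k) ** lmat (axis k 1) =
   weyl k ** lmat (- (exp (-(real CARD('n)+1) * t)) *\<^sub>R axis k 1) **
     diag_exp (t *\<^sub>R (diagA::real^('n::finite option))) ** umat (axis k 1)"
proof (rule matrix_eqI)
  fix x :: "real^('n option)"
  have key: "exp (- t) * x $ Some k - exp (-(real CARD('n)+1) * t) *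
               (exp (t * real CARD('n)) * (x $ None + x $ Some k)) = - (exp (- t) * x $ None)"
    unfolding mult.assoc[symmetric] exp_minus_Suc_card_mult_exp_card by (simp add: algebra_simps)
  have "(diag_exp (t *\<^sub>R diagA_swap k) *v (lmat (axis k 1) *v x)) $ i =
        (weyl k *v (lmat (- exp (- (real CARD('n) + 1) * t) *\<^sub>R axis k 1) *v
          (diag_exp (t *\<^sub>R diagA) *v (umat (axis k 1) *v x)))) $ i" for i
  proof (cases i)
    case None
    then show ?thesis
      using key by (simp add: diag_exp_mult lmat_mult umat_mult weyl_mult diagA_def diagA_swap_def
                      sum_axis_mult)
  next
    case (Some j)
    then show ?thesis
      using key by (cases "j = k") (simp_all add: diag_exp_mult lmat_mult umat_mult weyl_mult
                      diagA_def diagA_swap_def sum_axis_mult, simp_all add: axis_def)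
  qed
  then show "(diag_exp (t *\<^sub>R diagA_swap k) ** lmat (axis k 1)) *v x =
    (weyl k ** lmat (- (exp (-(real CARD('n)+1) * t)) *\<^sub>R axis k 1) ** diag_exp (t *\<^sub>R diagA) **
      umat (axis k 1)) *v x"
    by (simp add: vec_eq_iff flip: matrix_vector_mul_assoc)
qed

lemma weyl_eq_lmat_umat_lmat:
  fixes k :: "'n::finite"
  shows "weyl k = lmat (axis k 1) ** umat (- axis k 1) ** lmat (axis k 1)"
proof (rule matrix_eqI)
  fix x :: "real^('n option)"
  have "(weyl k *v x) $ i = (lmat (axis k 1) *v (umat (- axis k 1) *v (lmat (axis k 1) *v x))) $ i" for i
  proof (cases i)
    case (Some j)
    then show ?thesis
      by (cases "j = k") (simp_all add: lmat_mult umat_mult weyl_mult sum_axis_mult sum_negf,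
                          simp_all add: axis_def)
  qed (simp add: lmat_mult umat_mult weyl_mult sum_axis_mult sum_negf)
  then show "weyl k *v x = (lmat (axis k 1) ** umat (- axis k 1) ** lmat (axis k 1)) *v x"
    by (simp add: vec_eq_iff flip: matrix_vector_mul_assoc)
qed

lemma det_umat:
  fixes c :: "real^'n::finite"
  shows "det (umat c) = 1"
proof -
  have "(\<Sum>k\<in>UNIV. c$k *s row (Some k) (mat 1 :: real^('n option)^('n option))) $ j =
          (case j of None \<Rightarrow> 0 | Some l \<Rightarrow> c$l)" for j
    by (cases j) (simp_all add: row_def mat_def sum_component if_distrib cong: if_cong)
  then have rows: "umat c = (\<chi> r. if r = None
       then row None (mat 1) + (\<Sum>k\<in>UNIV. c$k *s row (Some k) (mat 1)) else row r (mat 1))"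
    by (auto simp: umat_def vec_eq_iff row_def mat_def split: option.splits)
  have "(\<Sum>k\<in>UNIV. c$k *s row (Some k) (mat 1 :: real^('n option)^('n option)))
          \<in> vec.span {row j (mat 1) |j. j \<noteq> None}"
    by (intro vec.span_sum vec.span_scale vec.span_base) auto
  from det_row_span[OF this] show ?thesis
    by (simp add: rows[symmetric])
qed

lemma det_lmat: "det (lmat c) = 1"
  by (simp add: lmat_def det_transpose det_umat)

lemma det_diag_exp: "det (diag_exp x) = exp (\<Sum>i\<in>UNIV. x$i)"
  by (simp add: diag_exp_def det_diagonal exp_sum)

lemma sum_diagA: "(\<Sum>i\<in>UNIV. (diagA::real^('n::finite option)) $ i) = 0"
  by (simp add: diagA_def sum_UNIV_option)

lemma sum_if_eq_card: "(\<Sum>k\<in>(UNIV::'n::finite set). if j = k then real CARD('n) else -1) = 1"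
proof -
  have "(\<Sum>k\<in>UNIV. if j = k then real CARD('n) else -1) = real CARD('n) + (\<Sum>k\<in>UNIV-{j}. -1)"
    by (subst sum.remove[of UNIV j]) auto
  also have "\<dots> = 1" by (simp add: card_Diff_singleton)
  finally show ?thesis .
qed

lemma sum_diagA_swap: "(\<Sum>i\<in>UNIV. (diagA_swap k::real^('n::finite option)) $ i) = 0"
proof -
  have "(\<Sum>j\<in>UNIV. if Some j = Some k then real CARD('n) else -1) = 1"
    using sum_if_eq_card[of k] by (simp add: eq_commute[of _ k])
  then show ?thesis by (simp add: diagA_swap_def sum_UNIV_option)
qed

lemma sum_diagA_swaps: "(\<Sum>k\<in>UNIV. diagA_swap k) = - (diagA::real^('n::finite option))"
  using sum_if_eq_card
  by (auto simp: vec_eq_iff diagA_swap_def diagA_def sum_component split: option.splits)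

lemma sum_scaleR_diagA: "(\<Sum>i\<in>UNIV. (t *\<^sub>R (diagA::real^('n::finite option))) $ i) = 0"
  by (simp add: sum_distrib_left[symmetric] sum_diagA)

lemma sum_scaleR_diagA_swap: "(\<Sum>i\<in>UNIV. (t *\<^sub>R (diagA_swap k::real^('n::finite option))) $ i) = 0"
  by (simp add: sum_distrib_left[symmetric] sum_diagA_swap)

lemma sum_diagA_swap_sum:
  fixes K :: "'n::finite set"
  shows "(\<Sum>i\<in>UNIV. (t *\<^sub>R (\<Sum>k\<in>K. diagA_swap k)) $ i) = 0"
proof -
  have "(\<Sum>i\<in>UNIV. \<Sum>k\<in>K. diagA_swap k $ i) =
        (\<Sum>k\<in>K. \<Sum>i\<in>UNIV. (diagA_swap k :: real^('n::finite option)) $ i)"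
    by (rule sum.swap)
  then show ?thesis
    by (simp add: sum_component sum_diagA_swap sum_distrib_left[symmetric])
qed

lemma mem_SL_iff: "A \<in> SL \<longleftrightarrow> det A = 1"
  unfolding SL_def by simp

lemma SL_mult: "A \<in> SL \<Longrightarrow> B \<in> SL \<Longrightarrow> A ** B \<in> SL"
  by (simp add: mem_SL_iff det_mul)

lemma umat_SL: "umat c \<in> SL"
  by (simp add: mem_SL_iff det_umat)

lemma lmat_SL: "lmat c \<in> SL"
  by (simp add: mem_SL_iff det_lmat)

lemma weyl_SL: "weyl k \<in> SL"
  by (simp add: mem_SL_iff weyl_eq_lmat_umat_lmat det_mul det_lmat det_umat)

lemma diag_exp_SL: "(\<Sum>i\<in>UNIV. x$i) = 0 \<Longrightarrow> diag_exp x \<in> SL"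
  by (simp add: mem_SL_iff det_diag_exp)

lemma diag_exp_diagA_SL: "diag_exp (t *\<^sub>R diagA) \<in> SL"
  by (rule diag_exp_SL[OF sum_scaleR_diagA])

lemma diag_exp_diagA_swap_SL: "diag_exp (t *\<^sub>R diagA_swap k) \<in> SL"
  by (rule diag_exp_SL[OF sum_scaleR_diagA_swap])

lemma expA_SL: "expA t \<in> SL"
  by (simp add: expA_eq_diag_exp diag_exp_diagA_SL)

definition blockdiag :: "real \<Rightarrow> real^'n^'n \<Rightarrow> real^('n::finite option)^('n option)" where
  "blockdiag c M = (\<chi> i j. case i of None \<Rightarrow> (case j of None \<Rightarrow> c | Some _ \<Rightarrow> 0)
                                   | Some a \<Rightarrow> (case j of None \<Rightarrow> 0 | Some b \<Rightarrow> M$a$b))"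

definition vtail :: "real^('n::finite option) \<Rightarrow> real^'n" where
  "vtail x = (\<chi> b. x$(Some b))"

lemma blockdiag_mult:
  fixes M :: "real^'n::finite^'n"
  shows "blockdiag c M *v x = (\<chi> i. case i of None \<Rightarrow> c * x$None | Some a \<Rightarrow> (M *v vtail x) $ a)"
  unfolding vec_eq_iff
proof
  fix i :: "'n option"
  show "(blockdiag c M *v x) $ i =
        (\<chi> i. case i of None \<Rightarrow> c * x$None | Some a \<Rightarrow> (M *v vtail x) $ a) $ i"
    by (cases i) (simp_all add: blockdiag_def matrix_vector_mult_def sum_UNIV_option vtail_def)
qed

lemma blockdiag_blockdiag: "blockdiag c M ** blockdiag d N = blockdiag (c * d) (M ** N)"
proof (rule matrix_eqI)
  fix x :: "real^('a option)"
  have "(blockdiag c M *v (blockdiag d N *v x)) $ i = (blockdiag (c * d) (M ** N) *v x) $ i" for i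
    by (cases i) (simp_all add: blockdiag_mult vtail_def matrix_vector_mul_assoc)
  then show "(blockdiag c M ** blockdiag d N) *v x = blockdiag (c * d) (M ** N) *v x"
    by (simp add: vec_eq_iff flip: matrix_vector_mul_assoc)
qed

lemma blockdiag_1: "blockdiag 1 (mat 1) = (mat 1 :: real^('n::finite option)^('n option))"
  by (rule matrix_eqI) (auto simp: blockdiag_mult vtail_def vec_eq_iff split: option.splits)

lemma expA_eq_blockdiag:
  "expA t = blockdiag (exp (t * real CARD('n))) (exp (- t) *\<^sub>R mat 1 :: real^'n::finite^'n)"
  by (auto simp: expA_def blockdiag_def vec_eq_iff mat_def split: option.splits)

lemma blockdiag_umat_axis_blockdiag:
  fixes X Y :: "real^'n::finite^'n"
  assumes "Y ** X = mat 1"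
  shows "blockdiag 1 Y ** umat (axis k 1) ** blockdiag 1 X = umat (X $ k)"
proof (rule matrix_eqI)
  fix x :: "real^('n option)"
  have "(blockdiag 1 Y *v (umat (axis k 1) *v (blockdiag 1 X *v x))) $ i = (umat (X $ k) *v x) $ i" for i
  proof (cases i)
    case None
    have "(X *v vtail x) $ k = (\<Sum>j\<in>UNIV. X$k$j * x$Some j)"
      by (simp add: matrix_vector_mult_def vtail_def)
    then show ?thesis
      using None by (simp add: blockdiag_mult umat_mult sum_axis_mult)
  next
    case (Some a)
    have "vtail (umat (axis k 1) *v (blockdiag 1 X *v x)) = X *v vtail x"
      by (simp add: vtail_def vec_eq_iff umat_mult blockdiag_mult)
    then have "Y *v vtail (umat (axis k 1) *v (blockdiag 1 X *v x)) = vtail x"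
      by (simp add: matrix_vector_mul_assoc assms)
    then show ?thesis
      using Some by (simp add: blockdiag_mult umat_mult vtail_def vec_eq_iff)
  qed
  then show "(blockdiag 1 Y ** umat (axis k 1) ** blockdiag 1 X) *v x = umat (X $ k) *v x"
    by (simp add: vec_eq_iff flip: matrix_vector_mul_assoc)
qed

section \<open>Eventually bounded functions\<close>

lemma tendsto_imp_Bfun:
  assumes "(f \<longlongrightarrow> l) F"
  shows "Bfun f F"
proof -
  have "eventually (\<lambda>x. dist (f x) l \<le> 1) F"
    using tendstoD[OF assms, of 1] by (auto elim: eventually_mono)
  then show ?thesis
    unfolding Bfun_metric_def by (intro exI[of _ l] exI[of _ 1]) auto
qed

lemma Bfun_add:
  fixes f g :: "'a \<Rightarrow> 'b::real_normed_vector"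
  assumes "Bfun f F" and "Bfun g F"
  shows "Bfun (\<lambda>x. f x + g x) F"
proof -
  obtain a b where "eventually (\<lambda>x. norm (f x) \<le> a) F" and "eventually (\<lambda>x. norm (g x) \<le> b) F"
    using assms by (auto elim!: BfunE)
  then have "eventually (\<lambda>x. norm (f x + g x) \<le> a + b) F"
    by eventually_elim (rule order_trans[OF norm_triangle_ineq], simp)
  then show ?thesis
    by (rule BfunI)
qed

lemma (in bounded_bilinear) Bfun_prod:
  assumes "Bfun f F" and "Bfun g F"
  shows "Bfun (\<lambda>x. prod (f x) (g x)) F"
proof -
  obtain K where K: "\<And>a b. norm (prod a b) \<le> norm a * norm b * K" and "K > 0"
    using pos_bounded by blast
  obtain a b where "eventually (\<lambda>x. norm (f x) \<le> a) F" and "eventually (\<lambda>x. norm (g x) \<le> b) F"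
    using assms by (auto elim!: BfunE)
  then have "eventually (\<lambda>x. norm (prod (f x) (g x)) \<le> a * b * K) F"
  proof eventually_elim
    case (elim x)
    have "norm (prod (f x) (g x)) \<le> norm (f x) * norm (g x) * K"
      by (rule K)
    also have "\<dots> \<le> a * b * K"
      using elim \<open>K > 0\<close> by (intro mult_right_mono mult_mono) (auto intro: order_trans[OF norm_ge_zero])
    finally show ?case .
  qed
  then show ?thesis
    by (rule BfunI)
qed

lemma bounded_bilinear_matrix_vector_mult:
  "bounded_bilinear (\<lambda>(A::real^'m^'n) (x::real^'m). A *v x)"
  unfolding bilinear_conv_bounded_bilinear[symmetric] bilinear_def
  by (auto intro!: linearI simp: algebra_simps scaleR_matrix_vector_assoc)

lemma bounded_bilinear_matrix_matrix_mult:
  "bounded_bilinear (\<lambda>(A::real^'m^'n) (B::real^'k^'m). A ** B)"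
proof -
  have "(A + C) ** B = A ** B + C ** B"
    "(c *\<^sub>R A) ** B = c *\<^sub>R (A ** B)" "A ** (c *\<^sub>R B) = c *\<^sub>R (A ** B)"
    for A C :: "real^'m^'n" and B :: "real^'k^'m" and c
    by (simp_all add: vec_eq_iff matrix_matrix_mult_def sum.distrib sum_distrib_left algebra_simps)
  then show ?thesis
    unfolding bilinear_conv_bounded_bilinear[symmetric] bilinear_def
    by (auto intro!: linearI simp: matrix_add_ldistrib)
qed

lemmas Bfun_matrix_vector_mult = bounded_bilinear.Bfun_prod[OF bounded_bilinear_matrix_vector_mult]

lemma span_orthonormal_expansion:
  fixes Bs :: "'a::euclidean_space set"
  assumes "finite Bs" and "pairwise orthogonal Bs" and "\<And>b. b \<in> Bs \<Longrightarrow> norm b = 1"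
    and "y \<in> span Bs"
  shows "y = (\<Sum>b\<in>Bs. (y \<bullet> b) *\<^sub>R b)"
proof -
  obtain u where u: "y = (\<Sum>v\<in>Bs. u v *\<^sub>R v)"
    using assms(4) span_finite[OF assms(1)] by auto
  have "y \<bullet> b = u b" if b: "b \<in> Bs" for b
  proof -
    have "y \<bullet> b = (\<Sum>v\<in>Bs. u v * (v \<bullet> b))"
      by (simp add: u inner_sum_left)
    also have "\<dots> = u b * (b \<bullet> b) + (\<Sum>v\<in>Bs - {b}. u v * (v \<bullet> b))"
      by (rule sum.remove[OF assms(1) b])
    also have "(\<Sum>v\<in>Bs - {b}. u v * (v \<bullet> b)) = 0"
      using assms(2) b by (intro sum.neutral) (auto simp: pairwise_def orthogonal_def)
    also have "b \<bullet> b = 1"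
      using assms(3)[OF b] by (simp add: norm_eq_1)
    finally show ?thesis by simp
  qed
  then show ?thesis
    by (simp add: u)
qed

lemma Bfun_imp_eventually_uniform_bound:
  fixes L :: "'a \<Rightarrow> real^'m^'n"
  assumes "subspace W" and "\<And>y. y \<in> W \<Longrightarrow> Bfun (\<lambda>t. L t *v y) F"
  shows "\<exists>C\<ge>0. eventually (\<lambda>t. \<forall>y\<in>W. norm (L t *v y) \<le> C * norm y) F"
proof -
  obtain Bs where Bs: "Bs \<subseteq> W" "pairwise orthogonal Bs" "\<And>x. x \<in> Bs \<Longrightarrow> norm x = 1"
     "independent Bs" "span Bs = W"
    using orthonormal_basis_subspace[OF assms(1)] by metis
  have fin: "finite Bs"
    using Bs(4) independent_imp_finite by blast
  obtain c where c: "\<And>b. b \<in> Bs \<Longrightarrow> c b > 0 \<and> eventually (\<lambda>t. norm (L t *v b) \<le> c b) F"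
    using assms(2) Bs(1) unfolding Bfun_def by (metis subsetD)
  define C where "C = (\<Sum>b\<in>Bs. c b)"
  have "eventually (\<lambda>t. \<forall>b\<in>Bs. norm (L t *v b) \<le> c b) F"
    using fin c by (simp add: eventually_ball_finite)
  then have "eventually (\<lambda>t. \<forall>y\<in>W. norm (L t *v y) \<le> C * norm y) F"
  proof eventually_elim
    case (elim t)
    show ?case
    proof
      fix y assume "y \<in> W"
      then have y: "y = (\<Sum>b\<in>Bs. (y \<bullet> b) *\<^sub>R b)"
        using span_orthonormal_expansion[OF fin Bs(2,3)] Bs(5) by blast
      have "L t *v y = (\<Sum>b\<in>Bs. (y \<bullet> b) *\<^sub>R (L t *v b))"
        by (subst y) (simp add: linear_sum[OF matrix_vector_mul_linear] matrix_vector_mult_scaleR)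
      also have "norm \<dots> \<le> (\<Sum>b\<in>Bs. norm y * c b)"
      proof (rule sum_norm_le)
        fix b assume b: "b \<in> Bs"
        have "\<bar>y \<bullet> b\<bar> \<le> norm y"
          using Cauchy_Schwarz_ineq2[of y b] Bs(3)[OF b] by simp
        then show "norm ((y \<bullet> b) *\<^sub>R (L t *v b)) \<le> norm y * c b"
          using elim b by (simp add: mult_mono)
      qed
      also have "\<dots> = C * norm y"
        by (simp add: C_def sum_distrib_left mult.commute)
      finally show "norm (L t *v y) \<le> C * norm y" .
    qed
  qed
  moreover have "C \<ge> 0"
    unfolding C_def using c by (intro sum_nonneg) (auto intro: less_imp_le)
  ultimately show ?thesis
    by blast
qed

section \<open>Continuous one-parameter groups of matrices\<close>

lemma oneparam_integral_right_invertible: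
  fixes \<phi> :: "real \<Rightarrow> real^'m^'m"
  assumes cont: "continuous_on UNIV \<phi>" and one: "\<phi> 0 = mat 1"
  shows "\<exists>h>0. \<exists>F'. integral {0..h} \<phi> ** F' = mat 1"
proof -
  obtain K where K0: "K > 0" and K: "\<And>a b. norm ((a::real^'m^'m) *v (b::real^'m)) \<le> norm a * norm b * K"
    using bounded_bilinear.pos_bounded[OF bounded_bilinear_matrix_vector_mult] by blast
  have "isCont \<phi> 0"
    using cont by (simp add: continuous_on_eq_continuous_at)
  moreover have "1 / (2 * K) > 0"
    using K0 by simp
  ultimately obtain \<delta> where \<delta>: "\<delta> > 0" "\<And>s. dist s 0 < \<delta> \<Longrightarrow> dist (\<phi> s) (\<phi> 0) < 1 / (2 * K)"
    unfolding continuous_at_eps_delta by blast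
  define h where "h = \<delta> / 2"
  have h: "h > 0" "h < \<delta>"
    using \<delta> by (auto simp: h_def)
  define F where "F = integral {0..h} \<phi>"
  have "((\<lambda>s::real. mat 1 :: real^'m^'m) has_integral h *\<^sub>R mat 1) {0..h}"
    using has_integral_const_real[of "mat 1 :: real^'m^'m" 0 h] h by simp
  then have F_int: "((\<lambda>s. \<phi> s - mat 1) has_integral (F - h *\<^sub>R mat 1)) {0..h}"
    unfolding F_def
    by (intro has_integral_diff integrable_integral integrable_continuous_real
        continuous_on_subset[OF cont]) auto
  have "norm (F - h *\<^sub>R mat 1) \<le> 1 / (2 * K) * h"
    using has_integral_bound_real[OF _ _ F_int, of "1 / (2 * K)" "{}"] \<delta>(2) h K0
    by (auto simp: dist_norm one less_imp_le)
  then have F_near: "norm (h *\<^sub>R mat 1 - F) \<le> 1 / (2 * K) * h"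
    by (simp add: norm_minus_commute)
  have "x = 0" if "F *v x = 0" for x
  proof -
    have "h * norm x = norm ((h *\<^sub>R mat 1 - F) *v x)"
      using that h by (simp add: algebra_simps scaleR_matrix_vector_assoc[symmetric])
    also have "\<dots> \<le> norm (h *\<^sub>R mat 1 - F) * norm x * K"
      by (rule K)
    also have "\<dots> \<le> (1 / (2 * K) * h) * norm x * K"
      using F_near K0 by (intro mult_right_mono) auto
    also have "\<dots> = h / 2 * norm x"
      using K0 by simp
    finally show "x = 0"
      using h by simp
  qed
  then show ?thesis
    using h(1) matrix_left_invertible_ker[of F] matrix_left_right_inverse unfolding F_def by metis
qed

lemma oneparam_mult_integral:
  fixes \<phi> :: "real \<Rightarrow> real^'m^'m"
  assumes cont: "continuous_on UNIV \<phi>" and hom: "\<And>s t. \<phi> (s + t) = \<phi> s ** \<phi> t"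
  shows "\<phi> t ** integral {0..h} \<phi> = integral {t..t+h} \<phi>"
proof -
  have "integral {0..h} (\<lambda>s. \<phi> t ** \<phi> s) = \<phi> t ** integral {0..h} \<phi>"
    using integral_linear[OF integrable_continuous_real[OF continuous_on_subset[OF cont]]
        bounded_bilinear.bounded_linear_right[OF bounded_bilinear_matrix_matrix_mult]]
    by (simp add: o_def)
  then have "\<phi> t ** integral {0..h} \<phi> = integral {0..h} (\<lambda>s. \<phi> t ** \<phi> s)"
    by simp
  also have "\<dots> = integral {t..t+h} \<phi>"
    using integral_shift_real_ivl[where a=t and b="t+h" and c=t and f=\<phi>]
    by (simp add: hom[symmetric] add.commute)
  finally show ?thesis .
qed

text \<open>Times the invertible integral of \<phi> over a short interval, \<phi> t is a difference of primitives
  of \<phi>, hence differentiable.\<close>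
lemma oneparam_has_vector_derivative_0:
  fixes \<phi> :: "real \<Rightarrow> real^'m^'m"
  assumes cont: "continuous_on UNIV \<phi>" and hom: "\<And>s t. \<phi> (s + t) = \<phi> s ** \<phi> t"
    and one: "\<phi> 0 = mat 1"
  shows "\<exists>D. (\<phi> has_vector_derivative D) (at 0)"
proof -
  obtain h F' where h: "h > 0" and F': "integral {0..h} \<phi> ** F' = mat 1"
    using oneparam_integral_right_invertible[OF cont one] by blast
  define G where "G u = integral {-1..u} \<phi>" for u
  have G_deriv: "(G has_vector_derivative \<phi> u) (at u)" if "u > -1" for u
  proof -
    have "(G has_vector_derivative \<phi> u) (at u within {-1..u+1})"
      unfolding G_def using that
      by (intro integral_has_vector_derivative continuous_on_subset[OF cont]) auto
    moreover have "u \<in> interior {-1..u+1}"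
      using that by simp
    ultimately show ?thesis
      by (simp only: at_within_interior)
  qed
  have shift: "\<phi> t ** integral {0..h} \<phi> = G (t + h) - G t" if "t > -1" for t
    using oneparam_mult_integral[OF cont hom]
      Henstock_Kurzweil_Integration.integral_combine[of "-1" t "t+h" \<phi>] that h integrable_continuous_real[OF continuous_on_subset[OF cont]]
    by (simp add: G_def eq_diff_eq add.commute)
  have "((G \<circ> (\<lambda>t. t + h)) has_vector_derivative (1 *\<^sub>R \<phi> h)) (at 0)"
  proof (rule vector_diff_chain_at)
    show "((\<lambda>t. t + h) has_vector_derivative 1) (at 0)"
      by (auto intro!: derivative_eq_intros)
    show "(G has_vector_derivative \<phi> h) (at (0 + h))"
      using G_deriv[of h] h by simp
  qed
  then have "((\<lambda>t. G (t + h)) has_vector_derivative \<phi> h) (at 0)"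
    by (simp add: o_def)
  then have "((\<lambda>t. G (t + h) - G t) has_vector_derivative \<phi> h - \<phi> 0) (at 0)"
    using G_deriv[of 0] by (intro has_vector_derivative_diff) auto
  then have "((\<lambda>t. (G (t + h) - G t) ** F') has_vector_derivative ((\<phi> h - \<phi> 0) ** F')) (at 0)"
    by (rule bounded_linear.has_vector_derivative[OF bounded_bilinear.bounded_linear_left[OF
          bounded_bilinear_matrix_matrix_mult]])
  then have "(\<phi> has_vector_derivative ((\<phi> h - \<phi> 0) ** F')) (at 0)"
  proof (rule has_vector_derivative_transform_within_open[of _ _ _ "{-1<..}"])
    fix t :: real
    assume "t \<in> {-1<..}"
    then have "(G (t + h) - G t) ** F' = \<phi> t ** (integral {0..h} \<phi> ** F')"
      using shift[of t] by (simp add: matrix_mul_assoc)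
    then show "(G (t + h) - G t) ** F' = \<phi> t"
      by (simp add: F')
  qed auto
  then show ?thesis
    by blast
qed

lemma oneparam_has_vector_derivative:
  fixes \<phi> :: "real \<Rightarrow> real^'m^'m"
  assumes hom: "\<And>s t. \<phi> (s + t) = \<phi> s ** \<phi> t" and D: "(\<phi> has_vector_derivative D) (at 0)"
  shows "(\<phi> has_vector_derivative \<phi> s ** D) (at s)"
proof -
  have "((\<phi> \<circ> (\<lambda>r. r - s)) has_vector_derivative (1 *\<^sub>R D)) (at s)"
  proof (rule vector_diff_chain_at)
    show "((\<lambda>r. r - s) has_vector_derivative 1) (at s)"
      by (auto intro!: derivative_eq_intros)
    show "(\<phi> has_vector_derivative D) (at (s - s))"
      using D by simp
  qed
  then have "((\<lambda>r. \<phi> s ** \<phi> (r - s)) has_vector_derivative \<phi> s ** D) (at s)"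
    using bounded_linear.has_vector_derivative[OF
        bounded_bilinear.bounded_linear_right[OF bounded_bilinear_matrix_matrix_mult]]
    by (simp add: o_def)
  moreover have "\<phi> s ** \<phi> (r - s) = \<phi> r" for r
    using hom[of s "r - s"] by simp
  ultimately show ?thesis
    by (simp only:)
qed

lemma oneparam_eigenvector:
  fixes \<phi> :: "real \<Rightarrow> real^'m^'m"
  assumes hom: "\<And>s t. \<phi> (s + t) = \<phi> s ** \<phi> t" and one: "\<phi> 0 = mat 1"
    and D: "(\<phi> has_vector_derivative D) (at 0)" and x: "D *v x = \<mu> *\<^sub>R x"
  shows "\<phi> t *v x = exp (\<mu> * t) *\<^sub>R x"
proof -
  define g where "g r = exp (- \<mu> * r) *\<^sub>R (\<phi> r *v x)" for r
  have g_deriv: "(g has_vector_derivative 0) (at r within UNIV)" for r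
  proof -
    have d: "((\<lambda>r. \<phi> r *v x) has_vector_derivative (\<phi> r ** D) *v x) (at r)"
      by (rule bounded_linear.has_vector_derivative[OF bounded_bilinear.bounded_linear_left[OF
            bounded_bilinear_matrix_vector_mult] oneparam_has_vector_derivative[OF hom D]])
    have "(g has_vector_derivative exp (- \<mu> * r) *\<^sub>R ((\<phi> r ** D) *v x) +
                  (- \<mu> * exp (- \<mu> * r)) *\<^sub>R (\<phi> r *v x)) (at r)"
      unfolding g_def by (rule has_vector_derivative_scaleR[OF _ d]) (auto intro!: derivative_eq_intros)
    moreover have "(\<phi> r ** D) *v x = \<mu> *\<^sub>R (\<phi> r *v x)"
      by (simp add: matrix_vector_mul_assoc[symmetric] x matrix_vector_mult_scaleR)
    moreover have "exp (- \<mu> * r) *\<^sub>R (\<mu> *\<^sub>R (\<phi> r *v x)) +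
                   (- \<mu> * exp (- \<mu> * r)) *\<^sub>R (\<phi> r *v x) = 0"
      by (simp only: scaleR_scaleR flip: scaleR_left_distrib) simp
    ultimately show ?thesis
      by (simp only:)
  qed
  have "g t = g 0"
    using has_vector_derivative_zero_constant[OF convex_UNIV g_deriv] by (metis UNIV_I)
  then have "exp (- \<mu> * t) *\<^sub>R (\<phi> t *v x) = x"
    by (simp add: g_def one)
  then have "exp (\<mu> * t) *\<^sub>R (exp (- \<mu> * t) *\<^sub>R (\<phi> t *v x)) = exp (\<mu> * t) *\<^sub>R x"
    by simp
  then show ?thesis
    by (simp add: exp_add[symmetric])
qed

section \<open>The projection onto the zero eigenspace\<close>

lemma linear_surjective_on_subspace_imp_inj_on:
  fixes f :: "'a::euclidean_space \<Rightarrow> 'a"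
  assumes lf: "linear f" and V: "subspace V" and fV: "f ` V = V"
  shows "inj_on f V"
proof -
  obtain B where B: "B \<subseteq> V" "independent B" "V \<subseteq> span B" "card B = dim V"
    by (rule basis_exists)
  have finB: "finite B"
    using B(2) by (rule independent_imp_finite)
  have spB: "span B = V"
    using B(1,3) V by (simp add: span_subspace)
  have spfB: "span (f ` B) = V"
    using fV spB by (simp add: linear_span_image[OF lf])
  have fBV: "f ` B \<subseteq> V"
    using B(1) fV by blast
  have cle: "card (f ` B) \<le> dim V"
    using card_image_le[OF finB, of f] B(4) by linarith
  have indfB: "independent (f ` B)"
    using card_le_dim_spanning[OF fBV _ _ cle] spfB finB by auto
  have "card (f ` B) = dim V"
    using basis_card_eq_dim[OF fBV _ indfB] spfB by simp
  then have "inj_on f B"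
    using B(4) finB by (simp add: inj_on_iff_eq_card)
  then show ?thesis
    using linear_inj_on_span_independent_image[OF lf indfB] spB by simp
qed

lemma span_nonzero_eigsp_kernel_eq_0:
  fixes D :: "real^'m^'m"
  assumes v: "v \<in> span (\<Union>\<mu>\<in>{\<mu>. \<mu> \<noteq> 0}. eigsp D \<mu>)" and Dv: "D *v v = 0"
  shows "v = 0"
proof -
  define S where "S = (\<Union>\<mu>\<in>{\<mu>. \<mu> \<noteq> 0}. eigsp D \<mu>)"
  have lf: "linear ((*v) D)"
    by (rule matrix_vector_mul_linear)
  have "(*v) D ` S \<subseteq> span S"
  proof
    fix z assume "z \<in> (*v) D ` S"
    then obtain s \<mu> where "s \<in> S" "z = \<mu> *\<^sub>R s"
      unfolding S_def eigsp_def by auto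
    then show "z \<in> span S"
      by (simp add: span_base span_scale)
  qed
  moreover have "S \<subseteq> (*v) D ` span S"
  proof
    fix s assume s: "s \<in> S"
    then obtain \<mu> where \<mu>: "\<mu> \<noteq> 0" "D *v s = \<mu> *\<^sub>R s"
      unfolding S_def eigsp_def by blast
    then have "D *v (inverse \<mu> *\<^sub>R s) = s"
      by (simp add: matrix_vector_mult_scaleR)
    moreover have "inverse \<mu> *\<^sub>R s \<in> span S"
      using s by (intro span_scale span_base)
    ultimately show "s \<in> (*v) D ` span S"
      by (metis image_eqI)
  qed
  ultimately have "(*v) D ` span S = span S"
    unfolding linear_span_image[OF lf, symmetric]
    by (intro subset_antisym span_minimal) (simp_all add: subspace_span)
  then have "inj_on ((*v) D) (span S)"
    by (rule linear_surjective_on_subspace_imp_inj_on[OF lf subspace_span])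
  moreover have "D *v v = D *v 0"
    using Dv by simp
  ultimately show "v = 0"
    using v span_zero unfolding S_def by (metis inj_onD)
qed

lemma pi0_eq:
  fixes D :: "real^'m^'m"
  assumes x: "x \<in> eigsp D 0" and y: "y \<in> Vminus D"
  shows "pi0 D (x + y) = x"
  unfolding pi0_def
proof (rule the_equality)
  have "Vminus D \<subseteq> span (\<Union>\<mu>\<in>{\<mu>. \<mu> \<noteq> 0}. eigsp D \<mu>)"
    unfolding Vminus_def by (intro span_mono UN_mono) auto
  then have y': "y \<in> span (\<Union>\<mu>\<in>{\<mu>. \<mu> \<noteq> 0}. eigsp D \<mu>)"
    using y by blast
  then show "x \<in> eigsp D 0 \<and> x + y - x \<in> span (\<Union>\<mu>\<in>{\<mu>. \<mu> \<noteq> 0}. eigsp D \<mu>)"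
    using x by simp
  fix w
  assume w: "w \<in> eigsp D 0 \<and> x + y - w \<in> span (\<Union>\<mu>\<in>{\<mu>. \<mu> \<noteq> 0}. eigsp D \<mu>)"
  have "w - x = y - (x + y - w)"
    by simp
  also have "\<dots> \<in> span (\<Union>\<mu>\<in>{\<mu>. \<mu> \<noteq> 0}. eigsp D \<mu>)"
    using w by (intro span_diff[OF y']) auto
  finally have "w - x \<in> span (\<Union>\<mu>\<in>{\<mu>. \<mu> \<noteq> 0}. eigsp D \<mu>)" .
  moreover have "D *v (w - x) = 0"
    using w x by (simp add: eigsp_def matrix_vector_mult_diff_distrib)
  ultimately show "w = x"
    using span_nonzero_eigsp_kernel_eq_0 by fastforce
qed

section \<open>Continuous representations of SL(n)\<close>

locale SL_rep =
  fixes \<rho> :: "real^('n::finite option)^('n option) \<Rightarrow> real^'m^'m"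
  assumes is_cont_rep: "is_cont_rep \<rho>"
begin

lemma rep_one: "\<rho> (mat 1) = mat 1"
  using is_cont_rep by (simp add: is_cont_rep_def)

lemma rep_mult: "A \<in> SL \<Longrightarrow> B \<in> SL \<Longrightarrow> \<rho> (A ** B) = \<rho> A ** \<rho> B"
  using is_cont_rep by (simp add: is_cont_rep_def)

lemma rep_mult_vec: "A \<in> SL \<Longrightarrow> B \<in> SL \<Longrightarrow> \<rho> (A ** B) *v x = \<rho> A *v (\<rho> B *v x)"
  by (simp add: rep_mult matrix_vector_mul_assoc)

lemma rep_continuous_on: "continuous_on SL \<rho>"
  using is_cont_rep by (simp add: is_cont_rep_def)

lemma rep_umat_add_vec: "\<rho> (umat c) *v (\<rho> (umat d) *v x) = \<rho> (umat (c + d)) *v x"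
  by (simp add: rep_mult_vec[symmetric] umat_SL umat_umat)

lemma rep_lmat_add_vec: "\<rho> (lmat c) *v (\<rho> (lmat d) *v x) = \<rho> (lmat (c + d)) *v x"
  by (simp add: rep_mult_vec[symmetric] lmat_SL lmat_lmat)

lemma rep_diag_exp_add_vec:
  "(\<Sum>i\<in>UNIV. x$i) = 0 \<Longrightarrow> (\<Sum>i\<in>UNIV. y$i) = 0 \<Longrightarrow>
     \<rho> (diag_exp x) *v (\<rho> (diag_exp y) *v v) = \<rho> (diag_exp (x + y)) *v v"
  by (simp add: rep_mult_vec[symmetric] diag_exp_SL diag_exp_add)

lemma tendsto_rep_lmat:
  assumes "(f \<longlongrightarrow> 0) F"
  shows "((\<lambda>t. \<rho> (lmat (f t *\<^sub>R c))) \<longlongrightarrow> mat 1) F"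
proof -
  have "((\<lambda>t. lmat (f t *\<^sub>R c)) \<longlongrightarrow> lmat (0 *\<^sub>R c)) F"
    unfolding lmat_def umat_def transpose_def
    by (intro tendsto_vec_lambda) (auto intro!: tendsto_eq_intros assms split: option.splits)
  then have "((\<lambda>t. lmat (f t *\<^sub>R c)) \<longlongrightarrow> mat 1) F"
    by (simp add: lmat_0)
  then have "((\<lambda>t. \<rho> (lmat (f t *\<^sub>R c))) \<longlongrightarrow> \<rho> (mat 1)) F"
    by (rule continuous_on_tendsto_compose[OF rep_continuous_on]) (simp_all add: mem_SL_iff det_lmat)
  then show ?thesis
    by (simp add: rep_one)
qed

lemma rep_expA_add: "\<rho> (expA (s + t)) = \<rho> (expA s) ** \<rho> (expA t)"
  using rep_mult[OF expA_SL expA_SL, of s t]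
  by (simp add: expA_eq_diag_exp diag_exp_add scaleR_add_left)

lemma continuous_on_rep_expA: "continuous_on UNIV (\<lambda>t. \<rho> (expA t))"
proof -
  have "continuous_on UNIV (expA :: real \<Rightarrow> real^('n option)^('n option))"
    unfolding expA_def
  proof (intro continuous_on_vec_lambda)
    fix i j :: "'n option"
    show "continuous_on UNIV
      (\<lambda>t. if i = j then if i = None then exp (t * real CARD('n)) else exp (- t) else 0)"
      by (cases i; cases j; cases "i = j") (simp_all add: continuous_intros)
  qed
  then show ?thesis
    by (rule continuous_on_compose2[OF rep_continuous_on]) (auto simp: expA_SL)
qed

lemma rep_expA_has_vector_derivative: "((\<lambda>t. \<rho> (expA t)) has_vector_derivative dA \<rho>) (at 0)"
proof -
  have "\<rho> (expA 0) = mat 1"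
    using rep_one by (simp add: expA_eq_diag_exp diag_exp_0)
  then obtain D where "((\<lambda>t. \<rho> (expA t)) has_vector_derivative D) (at 0)"
    using oneparam_has_vector_derivative_0[OF continuous_on_rep_expA rep_expA_add] by blast
  then show ?thesis
    unfolding dA_def by (simp add: vector_derivative_at)
qed

lemma rep_expA_eigsp: "x \<in> eigsp (dA \<rho>) \<mu> \<Longrightarrow> \<rho> (expA t) *v x = exp (\<mu> * t) *\<^sub>R x"
  using oneparam_eigenvector[OF rep_expA_add _ rep_expA_has_vector_derivative] rep_one
  by (simp add: eigsp_def expA_eq_diag_exp diag_exp_0)

lemma tendsto_rep_expA_Vminus:
  assumes "y \<in> Vminus (dA \<rho>)"
  shows "((\<lambda>t. \<rho> (expA t) *v y) \<longlongrightarrow> 0) at_top"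
proof -
  have "y \<in> span (\<Union>\<mu>\<in>{\<mu>. \<mu> < 0}. eigsp (dA \<rho>) \<mu>)"
    using assms by (simp add: Vminus_def)
  then show ?thesis
  proof (induction rule: span_induct_alt)
    case (step c x y)
    then obtain \<mu> where \<mu>: "\<mu> < 0" "x \<in> eigsp (dA \<rho>) \<mu>"
      by auto
    have "((\<lambda>t. exp (\<mu> * t)) \<longlongrightarrow> 0) at_top"
      using \<mu>(1) by real_asymp
    then have "((\<lambda>t. c *\<^sub>R (exp (\<mu> * t) *\<^sub>R x)) \<longlongrightarrow> c *\<^sub>R (0 *\<^sub>R x)) at_top"
      by (intro tendsto_scaleR tendsto_const)
    then have "((\<lambda>t. \<rho> (expA t) *v (c *\<^sub>R x)) \<longlongrightarrow> 0) at_top"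
      using rep_expA_eigsp[OF \<mu>(2)] by (simp add: matrix_vector_mult_scaleR)
    from tendsto_add[OF this step.IH] show ?case
      by (simp add: matrix_vector_right_distrib)
  qed simp
qed

lemma Bfun_rep_expA:
  assumes "x \<in> {a + b | a b. a \<in> eigsp (dA \<rho>) 0 \<and> b \<in> Vminus (dA \<rho>)}"
  shows "Bfun (\<lambda>t. \<rho> (expA t) *v x) at_top"
proof -
  obtain a b where ab: "x = a + b" "a \<in> eigsp (dA \<rho>) 0" "b \<in> Vminus (dA \<rho>)"
    using assms by blast
  have "((\<lambda>t. a + \<rho> (expA t) *v b) \<longlongrightarrow> a + 0) at_top"
    by (intro tendsto_add tendsto_const tendsto_rep_expA_Vminus ab(3))
  moreover have "\<rho> (expA t) *v x = a + \<rho> (expA t) *v b" for t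
    using rep_expA_eigsp[OF ab(2), of t] ab(1) by (simp add: matrix_vector_right_distrib)
  ultimately show ?thesis
    by (simp add: tendsto_imp_Bfun)
qed

lemma Bfun_rep_diagA_swap_lmat_axis:
  assumes "Bfun (\<lambda>t. \<rho> (expA t) *v (\<rho> (umat (axis k 1)) *v w)) at_top"
  shows "Bfun (\<lambda>t. \<rho> (diag_exp (t *\<^sub>R diagA_swap k)) *v (\<rho> (lmat (axis k 1)) *v w)) at_top"
proof -
  define s where "s t = - exp (-(real CARD('n)+1) * t)" for t
  have decomp: "\<rho> (diag_exp (t *\<^sub>R diagA_swap k)) *v (\<rho> (lmat (axis k 1)) *v w) =
          \<rho> (weyl k) *v (\<rho> (lmat (s t *\<^sub>R axis k 1)) *v (\<rho> (expA t) *v (\<rho> (umat (axis k 1)) *v w)))"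
    for t
  proof -
    have "\<rho> (diag_exp (t *\<^sub>R diagA_swap k)) *v (\<rho> (lmat (axis k 1)) *v w) =
            \<rho> (diag_exp (t *\<^sub>R diagA_swap k) ** lmat (axis k 1)) *v w"
      by (simp add: rep_mult_vec diag_exp_diagA_swap_SL lmat_SL)
    also have "\<dots> = \<rho> (weyl k ** lmat (s t *\<^sub>R axis k 1) ** expA t ** umat (axis k 1)) *v w"
      by (simp add: diag_exp_diagA_swap_lmat_axis s_def expA_eq_diag_exp)
    finally show ?thesis
      by (simp add: rep_mult_vec SL_mult weyl_SL lmat_SL expA_SL umat_SL)
  qed
  have "(s \<longlongrightarrow> 0) at_top"
    unfolding s_def by real_asymp
  then have "Bfun (\<lambda>t. \<rho> (lmat (s t *\<^sub>R axis k 1))) at_top"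
    by (rule tendsto_imp_Bfun[OF tendsto_rep_lmat])
  then show ?thesis
    unfolding decomp
    by (intro Bfun_matrix_vector_mult[OF Bfun_const] Bfun_matrix_vector_mult[OF _ assms])
qed

lemma Bfun_rep_diagA_swap_lmat_ones:
  assumes "\<And>k. Bfun (\<lambda>t. \<rho> (expA t) *v (\<rho> (umat (axis k 1)) *v w)) at_top"
  shows "Bfun (\<lambda>t. \<rho> (diag_exp (t *\<^sub>R diagA_swap k)) *v (\<rho> (lmat (\<chi> j. 1)) *v w)) at_top"
proof -
  define c :: "real^'n" where "c = (\<chi> j. 1) - axis k 1"
  have "c $ k = 0"
    by (simp add: c_def axis_def)
  have "\<rho> (diag_exp (t *\<^sub>R diagA_swap k)) *v (\<rho> (lmat (\<chi> j. 1)) *v w) =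
      \<rho> (lmat c) *v (\<rho> (diag_exp (t *\<^sub>R diagA_swap k)) *v (\<rho> (lmat (axis k 1)) *v w))" for t
  proof -
    have "diag_exp (t *\<^sub>R diagA_swap k) ** lmat (\<chi> j. 1) =
          lmat c ** diag_exp (t *\<^sub>R diagA_swap k) ** lmat (axis k 1)"
    proof -
      have "lmat (\<chi> j. 1) = lmat c ** lmat (axis k 1)"
        by (simp add: lmat_lmat c_def)
      then have "diag_exp (t *\<^sub>R diagA_swap k) ** lmat (\<chi> j. 1) =
                 (diag_exp (t *\<^sub>R diagA_swap k) ** lmat c) ** lmat (axis k 1)"
        by (simp add: matrix_mul_assoc)
      then show ?thesis
        by (simp add: diag_exp_diagA_swap_lmat[OF \<open>c $ k = 0\<close>])
    qed
    then show ?thesis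
      by (simp add: rep_mult_vec[symmetric] SL_mult lmat_SL diag_exp_diagA_swap_SL matrix_mul_assoc)
  qed
  then show ?thesis
    using Bfun_rep_diagA_swap_lmat_axis[OF assms]
    by (simp add: Bfun_matrix_vector_mult[OF Bfun_const])
qed

text \<open>Closing under the diagonal subgroup makes this subspace invariant, so that the flows of the
  diagA_swap k can be composed on it.\<close>
definition torus_bounded :: "(real^'m) set" where
  "torus_bounded = {y. \<forall>x. (\<Sum>i\<in>UNIV. x$i) = 0 \<longrightarrow>
      (\<forall>k. Bfun (\<lambda>t. \<rho> (diag_exp (t *\<^sub>R diagA_swap k)) *v (\<rho> (diag_exp x) *v y)) at_top)}"

lemma subspace_torus_bounded: "subspace torus_bounded"
  unfolding subspace_def torus_bounded_def
  by (auto simp: matrix_vector_right_distrib matrix_vector_mult_scaleR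
      intro!: Bfun_add bounded_bilinear.Bfun_prod[OF bounded_bilinear_scaleR Bfun_const])

lemma torus_bounded_invariant:
  assumes "y \<in> torus_bounded" and "(\<Sum>i\<in>UNIV. x$i) = 0"
  shows "\<rho> (diag_exp x) *v y \<in> torus_bounded"
  using assms unfolding torus_bounded_def by (auto simp: rep_diag_exp_add_vec sum.distrib)

lemma mem_torus_boundedI:
  assumes "\<And>k. Bfun (\<lambda>t. \<rho> (diag_exp (t *\<^sub>R diagA_swap k)) *v z) at_top"
  shows "z \<in> torus_bounded"
  unfolding torus_bounded_def
proof (intro CollectI allI impI)
  fix x :: "real^('n option)" and k :: 'n
  assume x: "(\<Sum>i\<in>UNIV. x$i) = 0"
  have "\<rho> (diag_exp (t *\<^sub>R diagA_swap k)) *v (\<rho> (diag_exp x) *v z) =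
        \<rho> (diag_exp x) *v (\<rho> (diag_exp (t *\<^sub>R diagA_swap k)) *v z)" for t
    by (simp add: rep_diag_exp_add_vec[OF sum_scaleR_diagA_swap x]
        rep_diag_exp_add_vec[OF x sum_scaleR_diagA_swap] add.commute)
  then show "Bfun (\<lambda>t. \<rho> (diag_exp (t *\<^sub>R diagA_swap k)) *v (\<rho> (diag_exp x) *v z)) at_top"
    by (simp add: Bfun_matrix_vector_mult[OF Bfun_const assms])
qed

lemma torus_bounded_uniform_bound_swap:
  "\<exists>C\<ge>0. eventually (\<lambda>t. \<forall>y\<in>torus_bounded.
      norm (\<rho> (diag_exp (t *\<^sub>R diagA_swap k)) *v y) \<le> C * norm y) at_top"
  by (rule Bfun_imp_eventually_uniform_bound[OF subspace_torus_bounded])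
     (auto simp: torus_bounded_def dest: spec[of _ 0] simp: diag_exp_0 rep_one)

lemma torus_bounded_uniform_bound:
  assumes "finite K"
  shows "\<exists>C\<ge>0. eventually (\<lambda>t. \<forall>y\<in>torus_bounded.
           norm (\<rho> (diag_exp (t *\<^sub>R (\<Sum>k\<in>K. diagA_swap k))) *v y) \<le> C * norm y) at_top"
  using assms
proof (induction K rule: finite_induct)
  case empty
  then show ?case
    using rep_one by (auto simp: diag_exp_0 intro!: exI[of _ 1])
next
  case (insert j K)
  obtain C1 where C1: "C1 \<ge> 0" "eventually (\<lambda>t. \<forall>y\<in>torus_bounded.
          norm (\<rho> (diag_exp (t *\<^sub>R diagA_swap j)) *v y) \<le> C1 * norm y) at_top"
    using torus_bounded_uniform_bound_swap by blast
  obtain C2 where C2: "C2 \<ge> 0" "eventually (\<lambda>t. \<forall>y\<in>torus_bounded.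
          norm (\<rho> (diag_exp (t *\<^sub>R (\<Sum>k\<in>K. diagA_swap k))) *v y) \<le> C2 * norm y) at_top"
    using insert.IH by blast
  have "eventually (\<lambda>t. \<forall>y\<in>torus_bounded.
      norm (\<rho> (diag_exp (t *\<^sub>R (\<Sum>k\<in>insert j K. diagA_swap k))) *v y) \<le> (C1 * C2) * norm y) at_top"
    using C1(2) C2(2)
  proof eventually_elim
    case (elim t)
    show ?case
    proof
      fix y assume y: "y \<in> torus_bounded"
      let ?y' = "\<rho> (diag_exp (t *\<^sub>R (\<Sum>k\<in>K. diagA_swap k))) *v y"
      have "\<rho> (diag_exp (t *\<^sub>R (\<Sum>k\<in>insert j K. diagA_swap k))) *v y =
            \<rho> (diag_exp (t *\<^sub>R diagA_swap j)) *v ?y'"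
        using insert.hyps rep_diag_exp_add_vec[OF sum_scaleR_diagA_swap sum_diagA_swap_sum]
        by (simp add: scaleR_right_distrib)
      moreover have "?y' \<in> torus_bounded"
        using torus_bounded_invariant[OF y sum_diagA_swap_sum] .
      then have "norm (\<rho> (diag_exp (t *\<^sub>R diagA_swap j)) *v ?y') \<le> C1 * (C2 * norm y)"
        using elim y C1(1) by (meson order_trans mult_left_mono)
      ultimately show "norm (\<rho> (diag_exp (t *\<^sub>R (\<Sum>k\<in>insert j K. diagA_swap k))) *v y)
                        \<le> (C1 * C2) * norm y"
        by (simp add: mult.assoc)
    qed
  qed
  then show ?case
    using C1(1) C2(1) by (intro exI[of _ "C1 * C2"]) auto
qed

lemma torus_bounded_norm_le_expA:
  assumes "z \<in> torus_bounded"
  shows "\<exists>C. eventually (\<lambda>t. norm z \<le> C * norm (\<rho> (expA t) *v z)) at_top"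
proof -
  obtain C where C: "eventually (\<lambda>t. \<forall>y\<in>torus_bounded.
      norm (\<rho> (diag_exp (t *\<^sub>R - diagA)) *v y) \<le> C * norm y) at_top"
    using torus_bounded_uniform_bound[of UNIV] by (auto simp: sum_diagA_swaps)
  have "eventually (\<lambda>t. norm z \<le> C * norm (\<rho> (expA t) *v z)) at_top"
    using C
  proof eventually_elim
    case (elim t)
    have "z = \<rho> (diag_exp (t *\<^sub>R - diagA)) *v (\<rho> (expA t) *v z)"
      using rep_diag_exp_add_vec[OF sum_scaleR_diagA[of "-t"] sum_scaleR_diagA[of t], of z]
      by (simp add: expA_eq_diag_exp diag_exp_0 rep_one)
    moreover have "\<rho> (expA t) *v z \<in> torus_bounded"
      unfolding expA_eq_diag_exp by (rule torus_bounded_invariant[OF assms sum_scaleR_diagA])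
    ultimately show ?case
      using elim by metis
  qed
  then show ?thesis
    by blast
qed

lemma eq_0_if_expA_tendsto_0:
  assumes lim: "((\<lambda>t. \<rho> (expA t) *v w) \<longlongrightarrow> 0) at_top"
    and bdd: "\<And>k. Bfun (\<lambda>t. \<rho> (expA t) *v (\<rho> (umat (axis k 1)) *v w)) at_top"
  shows "w = 0"
proof -
  define z where "z = \<rho> (lmat (\<chi> j. 1)) *v w"
  obtain C where C: "eventually (\<lambda>t. norm z \<le> C * norm (\<rho> (expA t) *v z)) at_top"
    using torus_bounded_norm_le_expA[OF mem_torus_boundedI[OF Bfun_rep_diagA_swap_lmat_ones[OF bdd]]]
    unfolding z_def by blast
  define s where "s t = exp (-(real CARD('n)+1) * t)" for t
  have "(s \<longlongrightarrow> 0) at_top"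
    unfolding s_def by real_asymp
  moreover have "\<rho> (expA t) *v z = \<rho> (lmat (s t *\<^sub>R (\<chi> j. 1))) *v (\<rho> (expA t) *v w)" for t
    by (simp add: z_def s_def expA_eq_diag_exp rep_mult_vec[symmetric] lmat_SL diag_exp_diagA_SL
        diag_exp_diagA_lmat)
  ultimately have "((\<lambda>t. \<rho> (expA t) *v z) \<longlongrightarrow> mat 1 *v 0) at_top"
    using bounded_bilinear.tendsto[OF bounded_bilinear_matrix_vector_mult tendsto_rep_lmat lim]
    by simp
  then have "((\<lambda>t. C * norm (\<rho> (expA t) *v z)) \<longlongrightarrow> C * 0) at_top"
    by (intro tendsto_mult tendsto_const) (simp add: tendsto_norm_zero)
  with C have "norm z \<le> C * 0"
    by (intro tendsto_le[OF trivial_limit_at_top_linorder _ tendsto_const]) auto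
  then have "z = 0"
    by simp
  moreover have "w = \<rho> (lmat (- (\<chi> j. 1))) *v z"
    by (simp add: z_def rep_lmat_add_vec lmat_0 rep_one)
  ultimately show ?thesis
    by simp
qed

lemma is_cont_rep_conj:
  fixes P Q :: "real^('n option)^('n option)"
  assumes PQ: "P ** Q = mat 1" and QP: "Q ** P = mat 1"
  shows "is_cont_rep (\<lambda>g. \<rho> (P ** g ** Q))"
proof -
  have conj_SL: "P ** g ** Q \<in> SL" if "g \<in> SL" for g
  proof -
    have "det P * det Q = 1"
      using PQ det_mul[of P Q] by simp
    then show ?thesis
      using that by (simp add: mem_SL_iff det_mul algebra_simps)
  qed
  have "(P ** g ** Q) ** (P ** h ** Q) = P ** g ** (Q ** P) ** h ** Q" for g h
    by (simp add: matrix_mul_assoc)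
  then have mult: "P ** (g ** h) ** Q = (P ** g ** Q) ** (P ** h ** Q)" for g h
    by (simp add: QP matrix_mul_assoc)
  have cont: "continuous_on SL (\<lambda>g. P ** g ** Q)"
    by (intro bounded_bilinear.continuous_on[OF bounded_bilinear_matrix_matrix_mult]
        continuous_on_const continuous_on_id)
  show ?thesis
    unfolding is_cont_rep_def
  proof (intro conjI ballI)
    show "\<rho> (P ** mat 1 ** Q) = mat 1"
      using PQ rep_one by simp
    show "\<rho> (P ** (g ** h) ** Q) = \<rho> (P ** g ** Q) ** \<rho> (P ** h ** Q)" if "g \<in> SL" "h \<in> SL" for g h
      using that by (simp add: mult rep_mult conj_SL)
    show "continuous_on SL (\<lambda>g. \<rho> (P ** g ** Q))"
      using conj_SL by (intro continuous_on_compose2[OF rep_continuous_on cont]) auto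
  qed
qed

text \<open>Conjugating by blockdiag 1 Y, which commutes with expA, turns the unipotents umat (X $ k)
  into the coordinate unipotents umat (axis k 1).\<close>
lemma eq_0_if_translates_bounded:
  fixes X Y :: "real^'n^'n"
  assumes YX: "Y ** X = mat 1"
    and lim: "((\<lambda>t. \<rho> (expA t) *v w) \<longlongrightarrow> 0) at_top"
    and bdd: "\<And>k. Bfun (\<lambda>t. \<rho> (expA t) *v (\<rho> (umat (X $ k)) *v w)) at_top"
  shows "w = 0"
proof -
  have XY: "X ** Y = mat 1"
    using YX matrix_left_right_inverse by blast
  define \<rho>' where "\<rho>' g = \<rho> (blockdiag 1 Y ** g ** blockdiag 1 X)" for g
  interpret conj: SL_rep \<rho>'
    unfolding \<rho>'_def
    by unfold_locales (intro is_cont_rep_conj; simp add: blockdiag_blockdiag XY YX blockdiag_1)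
  have "\<rho>' (expA t) = \<rho> (expA t)" for t
    by (simp add: \<rho>'_def expA_eq_blockdiag blockdiag_blockdiag YX
        bounded_bilinear.scaleR_left[OF bounded_bilinear_matrix_matrix_mult]
        bounded_bilinear.scaleR_right[OF bounded_bilinear_matrix_matrix_mult])
  moreover have "\<rho>' (umat (axis k 1)) = \<rho> (umat (X $ k))" for k
    by (simp add: \<rho>'_def blockdiag_umat_axis_blockdiag[OF YX])
  ultimately show ?thesis
    using conj.eq_0_if_expA_tendsto_0 lim bdd by simp
qed

end

lemma affine_basis_translates_matrix:
  fixes B :: "(real^'n::finite) set"
  assumes "affine_basis B" and "e0 \<in> B"
  shows "\<exists>X Y :: real^'n^'n. Y ** X = mat 1 \<and> (\<forall>k. X $ k + e0 \<in> B)"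
proof -
  define Bd where "Bd = (\<lambda>e. e - e0) ` (B - {e0})"
  have ind: "independent Bd" and spn: "span Bd = UNIV"
    using assms by (auto simp: affine_basis_def Bd_def)
  have "finite Bd" "card Bd = CARD('n)"
    using ind spn independent_imp_finite basis_card_eq_dim[of Bd UNIV] by (auto simp: dim_UNIV)
  then obtain f where f: "bij_betw f (UNIV::'n set) Bd"
    using finite_same_card_bij[of "UNIV::'n set" Bd] by auto
  define X :: "real^'n^'n" where "X = (\<chi> k. f k)"
  have "rows X = Bd"
    using f by (auto simp: rows_def row_def X_def bij_betw_def)
  then obtain Y where "Y ** X = mat 1"
    using matrix_left_invertible_span_rows[of X] spn by auto
  moreover have "X $ k + e0 \<in> B" for k
  proof -
    have "f k \<in> Bd"
      using f by (auto simp: bij_betw_def)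
    then show ?thesis
      by (auto simp: X_def Bd_def)
  qed
  ultimately show ?thesis
    by blast
qed

theorem proposition4p2:
  fixes \<rho> :: "real^('n::finite option)^('n option) \<Rightarrow> real^'m^'m"
    and B :: "(real^'n) set" and v :: "real^'m"
  assumes "is_cont_rep \<rho>"
    and "affine_basis B"
    and "v \<noteq> 0"
    and "\<forall>e\<in>B. \<rho> (umat e) *v v \<in> {x + y | x y. x \<in> eigsp (dA \<rho>) 0 \<and> y \<in> Vminus (dA \<rho>)}"
  shows "\<forall>e\<in>B. pi0 (dA \<rho>) (\<rho> (umat e) *v v) \<noteq> 0"
proof
  interpret SL_rep \<rho>
    by (rule SL_rep.intro[OF assms(1)])
  fix e0 assume e0: "e0 \<in> B"
  obtain a b where ab: "\<rho> (umat e0) *v v = a + b" "a \<in> eigsp (dA \<rho>) 0" "b \<in> Vminus (dA \<rho>)"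
    using assms(4) e0 by blast
  obtain X Y :: "real^'n^'n" where YX: "Y ** X = mat 1" and X: "\<And>k. X $ k + e0 \<in> B"
    using affine_basis_translates_matrix[OF assms(2) e0] by blast
  show "pi0 (dA \<rho>) (\<rho> (umat e0) *v v) \<noteq> 0"
  proof
    assume "pi0 (dA \<rho>) (\<rho> (umat e0) *v v) = 0"
    then have "\<rho> (umat e0) *v v \<in> Vminus (dA \<rho>)"
      using pi0_eq[OF ab(2,3)] ab by simp
    moreover have "Bfun (\<lambda>t. \<rho> (expA t) *v (\<rho> (umat (X $ k)) *v (\<rho> (umat e0) *v v))) at_top" for k
      using Bfun_rep_expA assms(4) X by (simp add: rep_umat_add_vec)
    ultimately have "\<rho> (umat e0) *v v = 0"
      using eq_0_if_translates_bounded[OF YX] tendsto_rep_expA_Vminus by blast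
    then have "\<rho> (umat (- e0)) *v (\<rho> (umat e0) *v v) = 0"
      by simp
    then show False
      using assms(3) by (simp add: rep_umat_add_vec umat_0 rep_one)
  qed
qed

end
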